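(* Let $\mathcal{A}$ be a finite-dimensional real associative unital algebra with a norm $\|\cdot\|$ satisfying $\|x\star y\|\le m_{\mathcal{A}}\|x\|\|y\|$ for some constant $m_{\mathcal{A}}>0$. If $f(z)=\sum_n c_n\star z^n$ is an entire function on $\mathcal{A}$, then $\limsup_{n\to\infty}\sqrt[n]{\|c_n\|}=0$, and consequently the series for $f$ is uniformly absolutely convergent on $\{z:\|z\|<L\}$ for every $L>0$.
   Context: $f$ entire means the power series $\sum c_n\star z^n$ ($c_n\in\mathcal{A}$) converges for every $z\in\mathcal{A}$. A series of functions $\sum g_n$ is uniformly absolutely convergent on $E$ if it converges absolutely at each point of $E$ and it (and $\sum\|g_n\|$) converges uniformly on $E$. *)

theory Defs
  imports "HOL-Analysis.Analysis" "HOL-Library.Liminf_Limsup"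
begin

definition unif_abs_conv_on :: "'b set \<Rightarrow> (nat \<Rightarrow> 'b \<Rightarrow> 'a::real_normed_vector) \<Rightarrow> bool" where
  "unif_abs_conv_on E g \<longleftrightarrow>
     (\<forall>z\<in>E. summable (\<lambda>n. norm (g n z))) \<and>
     uniform_limit E (\<lambda>N z. \<Sum>n<N. g n z) (\<lambda>z. \<Sum>n. g n z) sequentially \<and>
     uniform_limit E (\<lambda>N z. \<Sum>n<N. norm (g n z)) (\<lambda>z. \<Sum>n. norm (g n z)) sequentially"

end

theory Submission
  imports Defs
begin

text \<open>Evaluating the series at the real points z = t shows that norm (c n) * t ^ n tends to 0
for every t > 0, which is exactly the vanishing of the limsup of the n-th roots. By
submultiplicativity, norm (z ^ n) \<le> norm 1 * (m * norm z) ^ n, so on norm z < L the terms are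
dominated by a constant multiple of norm (c n) * (m * L) ^ n, whose series converges by
comparison with a geometric series; the Weierstrass M-test gives uniform convergence.\<close>

lemma norm_suminf_le_of_summable:
  fixes f :: "nat \<Rightarrow> 'a::real_normed_vector"
  assumes "summable f" and "\<And>n. norm (f n) \<le> g n" and "summable g"
  shows "norm (suminf f) \<le> suminf g"
proof (rule LIMSEQ_le)
  show "(\<lambda>n. norm (\<Sum>i<n. f i)) \<longlonglongrightarrow> norm (suminf f)"
    by (intro tendsto_norm summable_LIMSEQ assms(1))
  show "(\<lambda>n. \<Sum>i<n. g i) \<longlonglongrightarrow> suminf g"
    by (intro summable_LIMSEQ assms(3))
  show "\<exists>N. \<forall>n\<ge>N. norm (\<Sum>i<n. f i) \<le> (\<Sum>i<n. g i)"
    using assms(2) by (auto intro: order_trans[OF norm_sum] sum_mono)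
qed

lemma Weierstrass_m_test_summable:
  fixes f :: "nat \<Rightarrow> 'b \<Rightarrow> 'a::real_normed_vector"
  assumes summable_f: "\<And>x. x \<in> A \<Longrightarrow> summable (\<lambda>n. f n x)"
    and bound: "\<And>n x. x \<in> A \<Longrightarrow> norm (f n x) \<le> M n" and summable_M: "summable M"
  shows "uniform_limit A (\<lambda>N x. \<Sum>n<N. f n x) (\<lambda>x. \<Sum>n. f n x) sequentially"
proof (rule uniform_limitI)
  fix e :: real assume "0 < e"
  then obtain N where tail_M: "\<And>n. n \<ge> N \<Longrightarrow> norm (\<Sum>i. M (i + n)) < e"
    using suminf_exist_split[OF _ summable_M] by blast
  show "\<forall>\<^sub>F n in sequentially. \<forall>x\<in>A. dist (\<Sum>i<n. f i x) (\<Sum>i. f i x) < e"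
    unfolding eventually_sequentially
  proof (intro exI allI impI ballI)
    fix n x assume "N \<le> n" and x: "x \<in> A"
    have "dist (\<Sum>i<n. f i x) (\<Sum>i. f i x) = norm (\<Sum>i. f (i + n) x)"
      using suminf_minus_initial_segment[OF summable_f[OF x]]
      by (simp add: dist_norm norm_minus_commute)
    also have "\<dots> \<le> (\<Sum>i. M (i + n))"
      using summable_f[OF x] summable_M bound[OF x]
      by (intro norm_suminf_le_of_summable summable_ignore_initial_segment) auto
    also have "\<dots> < e"
      using tail_M[OF \<open>N \<le> n\<close>] by simp
    finally show "dist (\<Sum>i<n. f i x) (\<Sum>i. f i x) < e" .
  qed
qed

lemma unif_abs_conv_onI:
  fixes g :: "nat \<Rightarrow> 'b \<Rightarrow> 'a::real_normed_vector"
  assumes summable_g: "\<And>z. z \<in> E \<Longrightarrow> summable (\<lambda>n. g n z)"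
    and bound: "\<And>n z. z \<in> E \<Longrightarrow> norm (g n z) \<le> M n" and summable_M: "summable M"
  shows "unif_abs_conv_on E g"
  unfolding unif_abs_conv_on_def
proof (intro conjI ballI)
  show "summable (\<lambda>n. norm (g n z))" if "z \<in> E" for z
    using bound[OF that] by (intro summable_comparison_test[OF _ summable_M]) auto
  show "uniform_limit E (\<lambda>N z. \<Sum>n<N. g n z) (\<lambda>z. \<Sum>n. g n z) sequentially"
    by (rule Weierstrass_m_test_summable[OF summable_g bound summable_M])
  show "uniform_limit E (\<lambda>N z. \<Sum>n<N. norm (g n z)) (\<lambda>z. \<Sum>n. norm (g n z)) sequentially"
    using bound by (intro Weierstrass_m_test[OF _ summable_M]) auto
qed

lemma norm_power_le_submult:
  fixes z :: "'a::{real_normed_vector, real_algebra_1}"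
  assumes "m \<ge> 0" and norm_mult: "\<And>x y :: 'a. norm (x * y) \<le> m * norm x * norm y"
  shows "norm (z ^ n) \<le> norm (1::'a) * (m * norm z) ^ n"
proof (induction n)
  case 0
  then show ?case by simp
next
  case (Suc n)
  have "norm (z ^ Suc n) \<le> m * norm z * norm (z ^ n)"
    using norm_mult[of z "z ^ n"] by simp
  also have "\<dots> \<le> m * norm z * (norm (1::'a) * (m * norm z) ^ n)"
    using Suc \<open>m \<ge> 0\<close> by (intro mult_left_mono) auto
  finally show ?case by (simp add: algebra_simps)
qed

lemma norm_mult_power_le_submult:
  fixes c z :: "'a::{real_normed_vector, real_algebra_1}"
  assumes "m \<ge> 0" and norm_mult: "\<And>x y :: 'a. norm (x * y) \<le> m * norm x * norm y"
    and "norm z \<le> r"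
  shows "norm (c * z ^ n) \<le> m * norm (1::'a) * (norm c * (m * r) ^ n)"
proof -
  have "norm (c * z ^ n) \<le> m * norm c * norm (z ^ n)"
    by (rule norm_mult)
  also have "\<dots> \<le> m * norm c * (norm (1::'a) * (m * norm z) ^ n)"
    using \<open>m \<ge> 0\<close> by (intro mult_left_mono norm_power_le_submult[OF _ norm_mult]) auto
  also have "\<dots> \<le> m * norm c * (norm (1::'a) * (m * r) ^ n)"
    using assms by (intro mult_left_mono power_mono) auto
  finally show ?thesis by (simp add: algebra_simps)
qed

lemma tendsto_norm_coeff_mult_power_zero:
  fixes c :: "nat \<Rightarrow> 'a::{real_normed_vector, real_algebra_1}"
  assumes "summable (\<lambda>n. c n * of_real t ^ n)"
  shows "(\<lambda>n. norm (c n) * \<bar>t\<bar> ^ n) \<longlonglongrightarrow> 0"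
proof -
  have "c n * of_real (t ^ n) = (t ^ n) *\<^sub>R c n" for n
    by (simp only: of_real_def mult_scaleR_right mult_1_right)
  then have "norm (c n * of_real t ^ n) = norm (c n) * \<bar>t\<bar> ^ n" for n
    by (simp add: power_abs)
  then show ?thesis
    using tendsto_norm_zero[OF summable_LIMSEQ_zero[OF assms]] by simp
qed

lemma limsup_root_eq_0:
  fixes a :: "nat \<Rightarrow> real"
  assumes nonneg: "\<And>n. a n \<ge> 0" and decay: "\<And>t. t > 0 \<Longrightarrow> (\<lambda>n. a n * t ^ n) \<longlonglongrightarrow> 0"
  shows "limsup (\<lambda>n. ereal (root n (a n))) = 0"
proof (rule antisym)
  show "limsup (\<lambda>n. ereal (root n (a n))) \<le> 0"
  proof (rule ereal_le_epsilon2)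
    fix r :: real assume "r > 0"
    have "eventually (\<lambda>n. a n * (1 / r) ^ n < 1 \<and> n > 0) sequentially"
      using \<open>r > 0\<close> by (intro eventually_conj order_tendstoD(2)[OF decay] eventually_gt_at_top) auto
    then have "eventually (\<lambda>n. ereal (root n (a n)) \<le> ereal r) sequentially"
    proof eventually_elim
      case (elim n)
      then have "a n \<le> r ^ n"
        using \<open>r > 0\<close> by (simp add: field_simps power_divide)
      then have "root n (a n) \<le> root n (r ^ n)"
        using elim by (intro real_root_le_mono) auto
      also have "\<dots> = r"
        using elim \<open>r > 0\<close> by (simp add: real_root_pos2)
      finally show ?case by simp
    qed
    then show "limsup (\<lambda>n. ereal (root n (a n))) \<le> 0 + ereal r"
      by (simp add: Limsup_bounded)
  qed
  show "0 \<le> limsup (\<lambda>n. ereal (root n (a n)))"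
    using nonneg by (intro le_Limsup) (auto intro!: always_eventually real_root_ge_zero)
qed

lemma summable_mult_power_of_decay:
  fixes a :: "nat \<Rightarrow> real"
  assumes decay: "\<And>t. t > 0 \<Longrightarrow> (\<lambda>n. a n * t ^ n) \<longlonglongrightarrow> 0" and "R > 0"
  shows "summable (\<lambda>n. a n * R ^ n)"
proof (rule summable_comparison_test_ev)
  show "summable (\<lambda>n. (1 / 2 :: real) ^ n)"
    by (simp add: summable_geometric)
  have "eventually (\<lambda>n. \<bar>a n * (2 * R) ^ n\<bar> < 1) sequentially"
    using \<open>R > 0\<close> tendsto_rabs_zero[OF decay[of "2 * R"]] by (intro order_tendstoD(2)) auto
  then show "eventually (\<lambda>n. norm (a n * R ^ n) \<le> (1 / 2) ^ n) sequentially"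
  proof eventually_elim
    case (elim n)
    then have "\<bar>a n * R ^ n\<bar> * 2 ^ n \<le> 1"
      using \<open>R > 0\<close> by (simp add: abs_mult power_mult_distrib algebra_simps)
    then show ?case
      by (simp add: power_divide field_simps)
  qed
qed

theorem theorem5p24:
  fixes c :: "nat \<Rightarrow> 'a :: {real_normed_vector, real_algebra_1}" and m :: real
  assumes findim: "\<exists>B. finite B \<and> span B = (UNIV :: 'a set)"
    and m_pos: "m > 0"
    and norm_mult: "\<And>x y :: 'a. norm (x * y) \<le> m * norm x * norm y"
    and entire: "\<And>z :: 'a. summable (\<lambda>n. c n * z ^ n)"
  shows "limsup (\<lambda>n. ereal (root n (norm (c n)))) = 0 \<and>
         (\<forall>L>0. unif_abs_conv_on {z :: 'a. norm z < L} (\<lambda>n z. c n * z ^ n))"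
proof -
  have decay: "(\<lambda>n. norm (c n) * t ^ n) \<longlonglongrightarrow> 0" if "t > 0" for t
    using tendsto_norm_coeff_mult_power_zero[OF entire[of "of_real t"]] that by simp
  have "unif_abs_conv_on {z :: 'a. norm z < L} (\<lambda>n z. c n * z ^ n)" if "L > 0" for L
  proof (rule unif_abs_conv_onI[OF entire])
    show "summable (\<lambda>n. m * norm (1::'a) * (norm (c n) * (m * L) ^ n))"
      using m_pos \<open>L > 0\<close> by (intro summable_mult summable_mult_power_of_decay[OF decay]) auto
    show "norm (c n * z ^ n) \<le> m * norm (1::'a) * (norm (c n) * (m * L) ^ n)"
      if "z \<in> {z. norm z < L}" for n z
      using m_pos that by (intro norm_mult_power_le_submult[OF _ norm_mult]) auto
  qed
  with limsup_root_eq_0[OF norm_ge_zero decay] show ?thesis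
    by blast
qed

end
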